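(* Let $\mu$ be a probability distribution on $\mathbb{R}^d$ and $X \sim \mu$. Let $\delta_1, \delta_2, \dots > 0$, let $N_1, N_2, \dots$ be i.i.d. standard Gaussian vectors in $\mathbb{R}^d$ independent of $X$, and define $Y_0 = 0$, $Y_k = Y_{k-1} + \delta_k X + \sqrt{\delta_k} N_k$ for $k \ge 1$. Then $(Y_k)_{k \ge 0}$ is a Markov chain. *)

theory Defs
  imports "HOL-Probability.Probability"
begin

definition gen_sigma :: "'a measure \<Rightarrow> (nat \<Rightarrow> 'a \<Rightarrow> 'b::topological_space) \<Rightarrow> nat set \<Rightarrow> 'a measure" where
  "gen_sigma M Y J = sigma (space M) (\<Union>j\<in>J. {Y j -` A \<inter> space M | A. A \<in> sets borel})"

definition markov_chain :: "'a measure \<Rightarrow> (nat \<Rightarrow> 'a \<Rightarrow> 'b::topological_space) \<Rightarrow> bool" where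
  "markov_chain M Y \<longleftrightarrow>
     (\<forall>k. Y k \<in> borel_measurable M) \<and>
     (\<forall>k. \<forall>A \<in> sets borel.
        AE \<omega> in M. real_cond_exp M (gen_sigma M Y {..k}) (indicator (Y (Suc k) -` A \<inter> space M)) \<omega>
                  = real_cond_exp M (gen_sigma M Y {k}) (indicator (Y (Suc k) -` A \<inter> space M)) \<omega>)"

definition std_gaussian_vector :: "'a measure \<Rightarrow> ('a \<Rightarrow> real ^ 'd) \<Rightarrow> bool" where
  "std_gaussian_vector M Z \<longleftrightarrow>
     distributed M lborel Z (\<lambda>x. ennreal (\<Prod>i\<in>UNIV. std_normal_density (x $ i)))"

fun obs_chain :: "(nat \<Rightarrow> real) \<Rightarrow> ('a \<Rightarrow> real ^ 'd) \<Rightarrow> (nat \<Rightarrow> 'a \<Rightarrow> real ^ 'd) \<Rightarrow> nat \<Rightarrow> 'a \<Rightarrow> real ^ 'd" where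
  "obs_chain \<delta> X N 0 \<omega> = 0"
| "obs_chain \<delta> X N (Suc k) \<omega> =
     obs_chain \<delta> X N k \<omega> + \<delta> (Suc k) *\<^sub>R X \<omega> + sqrt (\<delta> (Suc k)) *\<^sub>R N (Suc k) \<omega>"

end

theory Submission
  imports Defs
begin

text \<open>Write \<open>t k = \<delta> 1 + \<dots> + \<delta> k\<close> and \<open>S k = \<Sum>i\<in>{1..k}. sqrt (\<delta> i) N i\<close> (\<open>time\<close> and \<open>noise\<close>
  below), so that \<open>Y k = t k X + S k\<close>, where \<open>S\<close> is a Brownian motion observed at the times \<open>t k\<close>.
  The combinations \<open>W j = t (j + 1) Y j - t j Y (j + 1)\<close> (\<open>bridge\<close> below) do not involve \<open>X\<close>. For
  independent centred Gaussian vectors \<open>U\<close>, \<open>V\<close> of variances \<open>a\<close>, \<open>b\<close>, the vectors \<open>U + V\<close> and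
  \<open>b U - a V\<close> are independent; by induction on \<open>k\<close> this makes \<open>S k\<close>, and hence \<open>(X, N (k + 1), S k)\<close>,
  independent of \<open>W 1, \<dots>, W (k - 1)\<close>. Now \<open>Y 0, \<dots>, Y k\<close> are functions of \<open>Y k\<close> and these \<open>W j\<close>,
  while \<open>Y k\<close> and \<open>Y (k + 1)\<close> are functions of \<open>(X, N (k + 1), S k)\<close>: conditioning on the whole past
  only adds information that is independent of the present and of the next step.\<close>

section \<open>Isotropic Gaussian densities\<close>

lemma normal_density_scale:
  fixes c y :: real
  assumes "c > 0"
  shows "c * normal_density 0 c (c * y) = normal_density 0 1 y"
proof -
  have "sqrt (2 * pi * c\<^sup>2) = c * sqrt (2 * pi)"
    using assms by (simp add: real_sqrt_mult mult.commute)
  moreover have "- (c * y)\<^sup>2 / (2 * c\<^sup>2) = - y\<^sup>2 / 2"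
    using assms by (simp add: power_mult_distrib)
  ultimately show ?thesis
    using assms unfolding normal_density_def by simp
qed

text \<open>Completing the square in the exponent.\<close>
lemma normal_density_mult_normal_density:
  fixes a b s v :: real
  assumes a: "a > 0" and b: "b > 0"
  shows "normal_density 0 (sqrt a) (s - v) * normal_density 0 (sqrt b) v =
    normal_density 0 (sqrt (a + b)) s *
      ((a + b) * normal_density 0 (sqrt (a * b * (a + b))) (b * s - (a + b) * v))"
proof -
  have exponents: "-(s - v)\<^sup>2 / (2 * a) + - v\<^sup>2 / (2 * b)
      = - s\<^sup>2 / (2 * (a + b)) + - (b * s - (a + b) * v)\<^sup>2 / (2 * (a * b * (a + b)))"
  proof -
    have "((s - v)\<^sup>2 * b + v\<^sup>2 * a) * (a + b) = s\<^sup>2 * (a * b) + (b * s - (a + b) * v)\<^sup>2"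
      by algebra
    moreover have "-(s - v)\<^sup>2 / (2 * a) + - v\<^sup>2 / (2 * b)
        = - (((s - v)\<^sup>2 * b + v\<^sup>2 * a) * (a + b)) / (2 * a * b * (a + b))"
      using a b by (simp add: divide_simps; simp add: algebra_simps)
    moreover have "- (s\<^sup>2 * (a * b) + (b * s - (a + b) * v)\<^sup>2) / (2 * a * b * (a + b))
        = - s\<^sup>2 / (2 * (a + b)) + - (b * s - (a + b) * v)\<^sup>2 / (2 * (a * b * (a + b)))"
      using a b by (simp add: divide_simps; simp add: algebra_simps)
    ultimately show ?thesis
      by simp
  qed
  have roots: "sqrt (2 * pi * (a + b)) * sqrt (2 * pi * (a * b * (a + b)))
      = (a + b) * (sqrt (2 * pi * a) * sqrt (2 * pi * b))"
  proof -
    have "sqrt (2 * pi * (a + b)) * sqrt (2 * pi * (a * b * (a + b)))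
        = sqrt ((a + b)\<^sup>2 * ((2 * pi * a) * (2 * pi * b)))"
      by (simp add: real_sqrt_mult[symmetric] power2_eq_square algebra_simps)
    with a b show ?thesis
      by (simp add: real_sqrt_mult)
  qed
  have "normal_density 0 (sqrt a) (s - v) * normal_density 0 (sqrt b) v
      = exp (-(s - v)\<^sup>2 / (2 * a) + - v\<^sup>2 / (2 * b)) / (sqrt (2 * pi * a) * sqrt (2 * pi * b))"
    using a b by (simp add: normal_density_def mult_exp_exp)
  also have "\<dots> = (a + b) * exp (- s\<^sup>2 / (2 * (a + b)) + - (b * s - (a + b) * v)\<^sup>2 / (2 * (a * b * (a + b))))
      / (sqrt (2 * pi * (a + b)) * sqrt (2 * pi * (a * b * (a + b))))"
    unfolding exponents roots using a b by simp
  also have "\<dots> = normal_density 0 (sqrt (a + b)) s *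
      ((a + b) * normal_density 0 (sqrt (a * b * (a + b))) (b * s - (a + b) * v))"
    using a b by (simp add: normal_density_def mult_exp_exp)
  finally show ?thesis .
qed

text \<open>Here \<open>v\<close> is a variance, whereas the second argument of \<^const>\<open>normal_density\<close> is a standard
  deviation.\<close>
definition gauss_density :: "real \<Rightarrow> real ^ 'd \<Rightarrow> real" where
  "gauss_density v x = (\<Prod>i\<in>UNIV. normal_density 0 (sqrt v) (x $ i))"

lemma gauss_density_nonneg: "gauss_density v x \<ge> 0"
  unfolding gauss_density_def by (intro prod_nonneg) (auto simp: normal_density_nonneg)

lemma borel_measurable_vec_nth [measurable]: "(\<lambda>x::real ^ 'd. x $ i) \<in> borel_measurable borel"
  by (intro borel_measurable_continuous_onI continuous_intros)

lemma borel_measurable_gauss_density [measurable]: "gauss_density v \<in> borel_measurable borel"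
  unfolding gauss_density_def by measurable

lemma std_gaussian_vector_iff:
  "std_gaussian_vector M Z \<longleftrightarrow> distributed M lborel Z (\<lambda>x. ennreal (gauss_density 1 x))"
  by (simp add: std_gaussian_vector_def gauss_density_def)

lemma gauss_density_scale:
  fixes x :: "real ^ 'd"
  assumes "c > 0"
  shows "c ^ CARD('d) * gauss_density (c\<^sup>2) (c *\<^sub>R x) = gauss_density 1 x"
proof -
  have "c ^ CARD('d) * gauss_density (c\<^sup>2) (c *\<^sub>R x) = (\<Prod>i\<in>UNIV. c * normal_density 0 c (c * x $ i))"
    using assms by (simp add: gauss_density_def prod.distrib)
  then show ?thesis
    using normal_density_scale[OF assms] by (simp add: gauss_density_def)
qed

lemma gauss_density_mult_gauss_density:
  fixes s v :: "real ^ 'd"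
  assumes "a > 0" and "b > 0"
  shows "gauss_density a (s - v) * gauss_density b v =
    gauss_density (a + b) s *
      ((a + b) ^ CARD('d) * gauss_density (a * b * (a + b)) (b *\<^sub>R s - (a + b) *\<^sub>R v))"
proof -
  have "gauss_density a (s - v) * gauss_density b v
      = (\<Prod>i\<in>UNIV. normal_density 0 (sqrt a) (s $ i - v $ i) * normal_density 0 (sqrt b) (v $ i))"
    by (simp add: gauss_density_def prod.distrib)
  then show ?thesis
    using normal_density_mult_normal_density[OF assms] by (simp add: gauss_density_def prod.distrib)
qed

lemma nn_integral_lborel_affine:
  fixes f :: "'a::euclidean_space \<Rightarrow> ennreal"
  assumes [measurable]: "f \<in> borel_measurable borel" and "c \<noteq> 0"
  shows "(\<integral>\<^sup>+x. f x \<partial>lborel) = ennreal (\<bar>c\<bar> ^ DIM('a)) * (\<integral>\<^sup>+x. f (t + c *\<^sub>R x) \<partial>lborel)"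
  by (subst lborel_affine[OF \<open>c \<noteq> 0\<close>, of t])
     (simp add: nn_integral_density nn_integral_distr nn_integral_cmult)

lemma nn_integral_gauss_density:
  assumes "v > 0"
  shows "(\<integral>\<^sup>+x. ennreal (gauss_density v (x :: real ^ 'd)) \<partial>lborel)
    = (\<integral>\<^sup>+x. ennreal (gauss_density 1 (x :: real ^ 'd)) \<partial>lborel)"
proof -
  have scale: "sqrt v ^ CARD('d) * gauss_density v (sqrt v *\<^sub>R x) = gauss_density 1 x" for x :: "real ^ 'd"
    using gauss_density_scale[of "sqrt v" x] assms by simp
  have "(\<integral>\<^sup>+x. ennreal (gauss_density v (x :: real ^ 'd)) \<partial>lborel)
      = ennreal (sqrt v ^ CARD('d)) * (\<integral>\<^sup>+x. ennreal (gauss_density v (sqrt v *\<^sub>R (x :: real ^ 'd))) \<partial>lborel)"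
    using nn_integral_lborel_affine[of "\<lambda>x::real ^ 'd. ennreal (gauss_density v x)" "sqrt v" 0] assms
    by simp
  also have "\<dots> = (\<integral>\<^sup>+x. ennreal (sqrt v ^ CARD('d) * gauss_density v (sqrt v *\<^sub>R (x :: real ^ 'd))) \<partial>lborel)"
    using assms by (simp add: nn_integral_cmult[symmetric] ennreal_mult gauss_density_nonneg)
  finally show ?thesis
    by (simp only: scale)
qed

lemma (in prob_space) distributed_scaleR:
  fixes f :: "'b::euclidean_space \<Rightarrow> ennreal"
  assumes f: "distributed M lborel X f" and c: "c \<noteq> 0"
  shows "distributed M lborel (\<lambda>x. c *\<^sub>R X x) (\<lambda>x. f (x /\<^sub>R c) / ennreal (\<bar>c\<bar> ^ DIM('b)))"
  unfolding distributed_def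
proof safe
  have [measurable]: "f \<in> borel_measurable borel" "X \<in> borel_measurable M"
    using f by (simp_all add: distributed_def)
  show "(\<lambda>x. f (x /\<^sub>R c) / ennreal (\<bar>c\<bar> ^ DIM('b))) \<in> borel_measurable lborel"
    by simp
  show "random_variable lborel (\<lambda>x. c *\<^sub>R X x)"
    by simp
  have eq: "ennreal (\<bar>c\<bar> ^ DIM('b)) * (f x / ennreal (\<bar>c\<bar> ^ DIM('b))) = f x" for x
    using c by (cases "f x")
       (auto simp: divide_ennreal ennreal_mult[symmetric] ennreal_top_divide ennreal_mult_top)
  have "density lborel f = distr M lborel X"
    using f by (simp add: distributed_def)
  with c show "distr M lborel (\<lambda>x. c *\<^sub>R X x) = density lborel (\<lambda>x. f (x /\<^sub>R c) / ennreal (\<bar>c\<bar> ^ DIM('b)))"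
    by (subst (2) lborel_affine[where c=c and t=0])
       (simp_all add: density_density_eq density_distr distr_distr eq cong: distr_cong)
qed

lemma (in prob_space) distributed_scaleR_gauss:
  fixes Z :: "'a \<Rightarrow> real ^ 'd"
  assumes "distributed M lborel Z (\<lambda>x. ennreal (gauss_density 1 x))" and "c > 0"
  shows "distributed M lborel (\<lambda>\<omega>. c *\<^sub>R Z \<omega>) (\<lambda>x. ennreal (gauss_density (c\<^sup>2) x))"
proof -
  have "ennreal (gauss_density 1 (x /\<^sub>R c)) / ennreal (\<bar>c\<bar> ^ CARD('d)) = ennreal (gauss_density (c\<^sup>2) x)"
    for x :: "real ^ 'd"
  proof -
    have "c ^ CARD('d) * gauss_density (c\<^sup>2) x = gauss_density 1 (x /\<^sub>R c)"
      using gauss_density_scale[OF \<open>c > 0\<close>, of "x /\<^sub>R c"] \<open>c > 0\<close> by simp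
    with \<open>c > 0\<close> show ?thesis
      by (simp add: divide_ennreal gauss_density_nonneg field_simps)
  qed
  with distributed_scaleR[OF assms(1), of c] \<open>c > 0\<close> show ?thesis
    by simp
qed

section \<open>Independence of \<open>\<sigma>\<close>-algebras\<close>

lemma Int_stable_vimages: "Int_stable {f -` A \<inter> S | A. A \<in> sets N}"
proof (rule Int_stableI)
  fix x y assume "x \<in> {f -` A \<inter> S | A. A \<in> sets N}" "y \<in> {f -` A \<inter> S | A. A \<in> sets N}"
  then obtain A B where "x = f -` A \<inter> S" "A \<in> sets N" "y = f -` B \<inter> S" "B \<in> sets N"
    by auto
  then show "x \<inter> y \<in> {f -` A \<inter> S | A. A \<in> sets N}"
    by (intro CollectI exI[of _ "A \<inter> B"]) auto
qed

lemma (in prob_space) indep_set_mono: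
  assumes "indep_set A B" "A' \<subseteq> A" "B' \<subseteq> B"
  shows "indep_set A' B'"
  using assms(1) unfolding indep_set_def
  by (rule indep_sets_mono_sets) (use assms(2,3) in \<open>auto split: bool.split\<close>)

lemma (in prob_space) indep_set_commute:
  assumes "indep_set A B"
  shows "indep_set B A"
  using assms unfolding indep_sets2_eq by (metis Int_commute mult.commute)

lemma (in prob_space) indep_set_trivial:
  assumes "A \<subseteq> events"
  shows "indep_set A {{}, space M}"
  using assms sets.sets_into_space by (intro indep_setI) (auto simp: Int_absorb2 prob_space)

lemma Int_stable_Int_pairs:
  assumes "Int_stable A" "Int_stable B"
  shows "Int_stable {a \<inter> b | a b. a \<in> A \<and> b \<in> B}"
proof (rule Int_stableI)
  fix x y
  assume "x \<in> {a \<inter> b | a b. a \<in> A \<and> b \<in> B}" "y \<in> {a \<inter> b | a b. a \<in> A \<and> b \<in> B}"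
  then obtain a b a' b' where x: "x = a \<inter> b" and y: "y = a' \<inter> b'"
    and mem: "a \<in> A" "b \<in> B" "a' \<in> A" "b' \<in> B"
    by auto
  have "x \<inter> y = (a \<inter> a') \<inter> (b \<inter> b')"
    using x y by blast
  moreover have "a \<inter> a' \<in> A" "b \<inter> b' \<in> B"
    using assms mem by (auto intro: Int_stableD)
  ultimately show "x \<inter> y \<in> {a \<inter> b | a b. a \<in> A \<and> b \<in> B}"
    by blast
qed

lemma Un_subset_Int_pairs:
  assumes "A \<subseteq> Pow \<Omega>" "B \<subseteq> Pow \<Omega>" "\<Omega> \<in> A" "\<Omega> \<in> B"
  shows "A \<union> B \<subseteq> {a \<inter> b | a b. a \<in> A \<and> b \<in> B}"
proof
  fix x
  assume "x \<in> A \<union> B"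
  then have "x = x \<inter> \<Omega> \<and> x \<in> A \<or> x = \<Omega> \<inter> x \<and> x \<in> B"
    using assms(1,2) by auto
  with assms(3,4) show "x \<in> {a \<inter> b | a b. a \<in> A \<and> b \<in> B}"
    by blast
qed

lemma sigma_sets_vimages_subset:
  assumes W: "sigma_algebra \<Omega> W" and f: "f \<in> sigma \<Omega> W \<rightarrow>\<^sub>M N"
  shows "sigma_sets \<Omega> {f -` A \<inter> \<Omega> | A. A \<in> sets N} \<subseteq> W"
proof (rule sigma_algebra.sigma_sets_subset[OF W], safe)
  fix A
  assume "A \<in> sets N"
  from measurable_sets[OF f this] show "f -` A \<inter> \<Omega> \<in> W"
    using W by (simp add: sigma_algebra.sets_measure_of_eq sigma_algebra.space_measure_of_eq)
qed

text \<open>The hypotheses make \<open>A\<close>, \<open>S\<close> and \<open>Z\<close> mutually independent.\<close>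
lemma (in prob_space) indep_set_sigma_sets_Un:
  assumes AB: "indep_set A B" and SZ: "indep_set S Z" and SB: "S \<subseteq> B" and ZB: "Z \<subseteq> B"
    and "sigma_algebra (space M) A" "sigma_algebra (space M) S"
    and "sigma_algebra (space M) B" "sigma_algebra (space M) Z"
  shows "indep_set (sigma_sets (space M) (A \<union> S)) Z"
proof -
  interpret A: sigma_algebra "space M" A by fact
  interpret S: sigma_algebra "space M" S by fact
  interpret B: sigma_algebra "space M" B by fact
  interpret Z: sigma_algebra "space M" Z by fact
  define Gen where "Gen = {a \<inter> s | a s. a \<in> A \<and> s \<in> S}"
  have "indep_set Gen Z"
  proof (rule indep_setI)
    show "Gen \<subseteq> events"
      using indep_setD_ev1[OF AB] indep_setD_ev1[OF SZ] by (auto simp: Gen_def)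
    show "Z \<subseteq> events"
      using SZ by (rule indep_setD_ev2)
    fix x z
    assume "x \<in> Gen" and z: "z \<in> Z"
    then obtain a s where x: "x = a \<inter> s" and a: "a \<in> A" and s: "s \<in> S"
      by (auto simp: Gen_def)
    have "s \<inter> z \<in> B"
      using s z SB ZB by auto
    then have "prob (x \<inter> z) = prob a * prob (s \<inter> z)"
      using indep_setD[OF AB a] by (simp add: x Int_assoc)
    also have "\<dots> = prob a * prob s * prob z"
      using indep_setD[OF SZ s z] by simp
    also have "prob a * prob s = prob x"
      using indep_setD[OF AB a] s SB by (auto simp: x)
    finally show "prob (x \<inter> z) = prob x * prob z" .
  qed
  moreover have "Int_stable Gen"
    unfolding Gen_def by (intro Int_stable_Int_pairs A.Int_stable S.Int_stable)
  ultimately have "indep_set (sigma_sets (space M) Gen) (sigma_sets (space M) Z)"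
    by (intro indep_set_sigma_sets Z.Int_stable)
  moreover have "sigma_sets (space M) (A \<union> S) \<subseteq> sigma_sets (space M) Gen"
    unfolding Gen_def
    by (intro sigma_sets_mono' Un_subset_Int_pairs[where \<Omega>="space M"] A.space_closed S.space_closed A.top S.top)
  ultimately show ?thesis
    by (rule indep_set_mono) auto
qed

lemma (in prob_space) indep_vars_indep_set_UN:
  assumes indep: "indep_vars (\<lambda>_. borel) Z I"
    and "I1 \<subseteq> I" "I2 \<subseteq> I" "I1 \<inter> I2 = {}"
  shows "indep_set (sigma_sets (space M) (\<Union>i\<in>I1. {Z i -` A \<inter> space M | A. A \<in> sets borel}))
                   (sigma_sets (space M) (\<Union>i\<in>I2. {Z i -` A \<inter> space M | A. A \<in> sets borel}))"
proof -
  let ?E = "\<lambda>i. {Z i -` A \<inter> space M | A. A \<in> sets borel}"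
  have "indep_sets ?E I"
    using indep unfolding indep_vars_def2 by auto
  then have "indep_sets ?E (\<Union>j. case_bool I1 I2 j)"
    by (rule indep_sets_mono_index[rotated]) (use assms(2,3) in \<open>auto split: bool.splits\<close>)
  then have "indep_sets (\<lambda>j. sigma_sets (space M) (\<Union>i\<in>case_bool I1 I2 j. ?E i)) UNIV"
  proof (rule indep_sets_collect_sigma)
    show "disjoint_family_on (case_bool I1 I2) UNIV"
      using assms(4) by (auto simp: disjoint_family_on_def split: bool.split)
  qed (rule Int_stable_vimages)
  then show ?thesis
    unfolding indep_set_def by (rule indep_sets_mono_sets) (auto split: bool.split)
qed

section \<open>Sums of independent Gaussian vectors\<close>

lemma (in prob_space) emeasure_indep_var_density:
  fixes U V :: "'a \<Rightarrow> 'b::euclidean_space"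
  assumes U: "distributed M lborel U f" and V: "distributed M lborel V g"
    and indep: "indep_var borel U borel V"
    and P[measurable]: "Measurable.pred (borel \<Otimes>\<^sub>M borel) (\<lambda>(u, v). P u v)"
  shows "emeasure M {\<omega> \<in> space M. P (U \<omega>) (V \<omega>)}
    = (\<integral>\<^sup>+v. \<integral>\<^sup>+u. f u * g v * indicator {(u, v). P u v} (u, v) \<partial>lborel \<partial>lborel)"
proof -
  let ?T = "{(u, v). P u v}"
  have joint: "distributed M (lborel \<Otimes>\<^sub>M lborel) (\<lambda>\<omega>. (U \<omega>, V \<omega>)) (\<lambda>(u, v). f u * g v)"
    using distributed_joint_indep[OF _ _ U V] indep
    by (simp add: indep_var_eq lborel.sigma_finite_measure_axioms)
  have T: "?T \<in> sets (lborel \<Otimes>\<^sub>M lborel)"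
  proof -
    have "?T = {x \<in> space (borel \<Otimes>\<^sub>M borel). (\<lambda>(u, v). P u v) x}"
      by (auto simp: space_pair_measure)
    then show ?thesis
      by (simp cong: sets_pair_measure_cong)
  qed
  have [measurable]: "f \<in> borel_measurable borel" "g \<in> borel_measurable borel"
    using U V by (simp_all add: distributed_def)
  have "{\<omega> \<in> space M. P (U \<omega>) (V \<omega>)} = (\<lambda>\<omega>. (U \<omega>, V \<omega>)) -` ?T \<inter> space M"
    by auto
  also have "emeasure M \<dots> = (\<integral>\<^sup>+z. (case z of (u, v) \<Rightarrow> f u * g v) * indicator ?T z \<partial>(lborel \<Otimes>\<^sub>M lborel))"
    by (rule distributed_emeasure[OF joint T])
  also have "\<dots> = (\<integral>\<^sup>+v. \<integral>\<^sup>+u. f u * g v * indicator ?T (u, v) \<partial>lborel \<partial>lborel)"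
    by (subst lborel_pair.nn_integral_snd[symmetric]) (auto simp: case_prod_beta)
  finally show ?thesis .
qed

lemma nn_integral_gauss_density_mult_indicator:
  fixes F :: "(real ^ 'd) set" and s :: "real ^ 'd"
  assumes a: "a > 0" and b: "b > 0" and [measurable]: "F \<in> sets borel"
  shows "(\<integral>\<^sup>+v. ennreal (gauss_density a (s - v)) * ennreal (gauss_density b v) *
            indicator F (b *\<^sub>R s - (a + b) *\<^sub>R v) \<partial>lborel)
    = ennreal (gauss_density (a + b) s) * (\<integral>\<^sup>+w. ennreal (gauss_density (a * b * (a + b)) w) * indicator F w \<partial>lborel)"
proof -
  define K where "K w = ennreal (gauss_density (a * b * (a + b)) w) * indicator F w" for w :: "real ^ 'd"
  have [measurable]: "K \<in> borel_measurable borel"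
    unfolding K_def by measurable
  have "ennreal (gauss_density a (s - v)) * ennreal (gauss_density b v) * indicator F (b *\<^sub>R s - (a + b) *\<^sub>R v)
      = ennreal (gauss_density (a + b) s) * (ennreal ((a + b) ^ CARD('d)) * K (b *\<^sub>R s + (- (a + b)) *\<^sub>R v))"
    for v
  proof -
    have "ennreal (gauss_density a (s - v)) * ennreal (gauss_density b v)
        = ennreal (gauss_density (a + b) s) *
          (ennreal ((a + b) ^ CARD('d)) * ennreal (gauss_density (a * b * (a + b)) (b *\<^sub>R s - (a + b) *\<^sub>R v)))"
      using gauss_density_mult_gauss_density[OF a b, of s v] a b
      by (simp add: ennreal_mult[symmetric] gauss_density_nonneg)
    moreover have "b *\<^sub>R s + (- (a + b)) *\<^sub>R v = b *\<^sub>R s - (a + b) *\<^sub>R v"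
      by (simp only: scaleR_minus_left diff_conv_add_uminus)
    ultimately show ?thesis
      by (simp add: K_def mult_ac)
  qed
  then have "(\<integral>\<^sup>+v. ennreal (gauss_density a (s - v)) * ennreal (gauss_density b v) *
          indicator F (b *\<^sub>R s - (a + b) *\<^sub>R v) \<partial>lborel)
      = (\<integral>\<^sup>+v. ennreal (gauss_density (a + b) s) *
          (ennreal ((a + b) ^ CARD('d)) * K (b *\<^sub>R s + (- (a + b)) *\<^sub>R v)) \<partial>lborel)"
    by (simp only:)
  also have "\<dots> = ennreal (gauss_density (a + b) s) *
      (ennreal ((a + b) ^ CARD('d)) * (\<integral>\<^sup>+v. K (b *\<^sub>R s + (- (a + b)) *\<^sub>R v) \<partial>lborel))"
    by (simp add: nn_integral_cmult)
  also have "\<dots> = ennreal (gauss_density (a + b) s) * (\<integral>\<^sup>+w. K w \<partial>lborel)"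
    using nn_integral_lborel_affine[of K "- (a + b)" "b *\<^sub>R s"] a b by (simp add: add.commute)
  finally show ?thesis
    by (simp add: K_def)
qed

text \<open>The change of variables \<open>(u, v) \<mapsto> (u + v, b u - a v)\<close> factorises the product density.\<close>
lemma nn_integral_gauss_sum_diff:
  fixes E F :: "(real ^ 'd) set"
  assumes a: "a > 0" and b: "b > 0" and [measurable]: "E \<in> sets borel" and F [measurable]: "F \<in> sets borel"
  shows "(\<integral>\<^sup>+v. \<integral>\<^sup>+u. ennreal (gauss_density a u) * ennreal (gauss_density b v) *
            indicator E (u + v) * indicator F (b *\<^sub>R u - a *\<^sub>R v) \<partial>lborel \<partial>lborel)
    = (\<integral>\<^sup>+s. ennreal (gauss_density (a + b) s) * indicator E s \<partial>lborel) *
      (\<integral>\<^sup>+w. ennreal (gauss_density (a * b * (a + b)) w) * indicator F w \<partial>lborel)"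
proof -
  have shift: "(\<integral>\<^sup>+u. ennreal (gauss_density a u) * ennreal (gauss_density b v) *
        indicator E (u + v) * indicator F (b *\<^sub>R u - a *\<^sub>R v) \<partial>lborel)
      = (\<integral>\<^sup>+s. indicator E s * (ennreal (gauss_density a (s - v)) * ennreal (gauss_density b v) *
        indicator F (b *\<^sub>R s - (a + b) *\<^sub>R v)) \<partial>lborel)" for v
  proof -
    have "(\<lambda>u. ennreal (gauss_density a u) * ennreal (gauss_density b v) *
        indicator E (u + v) * indicator F (b *\<^sub>R u - a *\<^sub>R v)) \<in> borel_measurable borel"
      by measurable
    from nn_integral_lborel_affine[OF this one_neq_zero, of "- v"]
    show ?thesis
      by (simp add: scaleR_diff_right scaleR_add_left diff_diff_eq add.commute mult_ac)
  qed
  have "(\<integral>\<^sup>+v. \<integral>\<^sup>+u. ennreal (gauss_density a u) * ennreal (gauss_density b v) *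
          indicator E (u + v) * indicator F (b *\<^sub>R u - a *\<^sub>R v) \<partial>lborel \<partial>lborel)
      = (\<integral>\<^sup>+s. indicator E s * (\<integral>\<^sup>+v. ennreal (gauss_density a (s - v)) * ennreal (gauss_density b v) *
          indicator F (b *\<^sub>R s - (a + b) *\<^sub>R v) \<partial>lborel) \<partial>lborel)"
    unfolding shift by (subst lborel_pair.Fubini') (simp_all add: nn_integral_cmult)
  also have "\<dots> = (\<integral>\<^sup>+s. (ennreal (gauss_density (a + b) s) * indicator E s) *
      (\<integral>\<^sup>+w. ennreal (gauss_density (a * b * (a + b)) w) * indicator F w \<partial>lborel) \<partial>lborel)"
    unfolding nn_integral_gauss_density_mult_indicator[OF a b F] by (simp only: mult_ac)
  also have "\<dots> = (\<integral>\<^sup>+s. ennreal (gauss_density (a + b) s) * indicator E s \<partial>lborel) *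
      (\<integral>\<^sup>+w. ennreal (gauss_density (a * b * (a + b)) w) * indicator F w \<partial>lborel)"
    by (rule nn_integral_multc) measurable
  finally show ?thesis .
qed

lemma (in prob_space) emeasure_gauss_sum_diff:
  fixes U V :: "'a \<Rightarrow> real ^ 'd"
  assumes U: "distributed M lborel U (\<lambda>x. ennreal (gauss_density a x))"
    and V: "distributed M lborel V (\<lambda>x. ennreal (gauss_density b x))"
    and indep: "indep_var borel U borel V" and a: "a > 0" and b: "b > 0"
    and [measurable]: "E \<in> sets borel" "F \<in> sets borel"
  shows "emeasure M {\<omega> \<in> space M. U \<omega> + V \<omega> \<in> E \<and> b *\<^sub>R U \<omega> - a *\<^sub>R V \<omega> \<in> F}
    = (\<integral>\<^sup>+s. ennreal (gauss_density (a + b) s) * indicator E s \<partial>lborel) *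
      (\<integral>\<^sup>+w. ennreal (gauss_density (a * b * (a + b)) w) * indicator F w \<partial>lborel)"
proof -
  have "indicator {(u, v). u + v \<in> E \<and> b *\<^sub>R u - a *\<^sub>R v \<in> F} (u, v)
      = (indicator E (u + v) * indicator F (b *\<^sub>R u - a *\<^sub>R v) :: ennreal)" for u v :: "real ^ 'd"
    by (simp add: indicator_def)
  then show ?thesis
    using emeasure_indep_var_density[OF U V indep, of "\<lambda>u v. u + v \<in> E \<and> b *\<^sub>R u - a *\<^sub>R v \<in> F"]
      nn_integral_gauss_sum_diff[OF a b assms(6,7)]
    by (simp add: mult.assoc)
qed

lemma (in prob_space) nn_integral_gauss_density_eq_1:
  fixes U :: "'a \<Rightarrow> real ^ 'd"
  assumes "distributed M lborel U (\<lambda>x. ennreal (gauss_density a x))" and "a > 0" and "v > 0"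
  shows "(\<integral>\<^sup>+x. ennreal (gauss_density v (x :: real ^ 'd)) \<partial>lborel) = 1"
proof -
  have "(\<integral>\<^sup>+x. ennreal (gauss_density v (x :: real ^ 'd)) \<partial>lborel)
      = (\<integral>\<^sup>+x. ennreal (gauss_density a (x :: real ^ 'd)) \<partial>lborel)"
    using nn_integral_gauss_density[OF \<open>v > 0\<close>, where 'd='d] nn_integral_gauss_density[OF \<open>a > 0\<close>, where 'd='d]
    by simp
  also have "\<dots> = 1"
    using distributed_emeasure[OF assms(1), of UNIV] by (simp add: emeasure_space_1)
  finally show ?thesis .
qed

lemma (in prob_space) distributed_gauss_sum:
  fixes U V :: "'a \<Rightarrow> real ^ 'd"
  assumes U: "distributed M lborel U (\<lambda>x. ennreal (gauss_density a x))"
    and V: "distributed M lborel V (\<lambda>x. ennreal (gauss_density b x))"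
    and indep: "indep_var borel U borel V" and a: "a > 0" and b: "b > 0"
  shows "distributed M lborel (\<lambda>\<omega>. U \<omega> + V \<omega>) (\<lambda>x. ennreal (gauss_density (a + b) x))"
proof -
  have [measurable]: "U \<in> borel_measurable M" "V \<in> borel_measurable M"
    using U V by (simp_all add: distributed_def)
  have "distr M lborel (\<lambda>\<omega>. U \<omega> + V \<omega>) = density lborel (\<lambda>x. ennreal (gauss_density (a + b) x))"
  proof (rule measure_eqI)
    fix A :: "(real ^ 'd) set"
    assume "A \<in> sets (distr M lborel (\<lambda>\<omega>. U \<omega> + V \<omega>))"
    then have A [measurable]: "A \<in> sets borel"
      by simp
    have "(\<lambda>\<omega>. U \<omega> + V \<omega>) -` A \<inter> space M = {\<omega> \<in> space M. U \<omega> + V \<omega> \<in> A \<and> b *\<^sub>R U \<omega> - a *\<^sub>R V \<omega> \<in> UNIV}"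
      by auto
    then show "emeasure (distr M lborel (\<lambda>\<omega>. U \<omega> + V \<omega>)) A
        = emeasure (density lborel (\<lambda>x. ennreal (gauss_density (a + b) x))) A"
      using emeasure_gauss_sum_diff[OF U V indep a b A space_in_borel] nn_integral_gauss_density_eq_1[OF U a] a b
      by (simp add: emeasure_distr emeasure_density)
  qed simp
  then show ?thesis
    by (simp add: distributed_def)
qed

lemma (in prob_space) indep_var_gauss_sum_diff:
  fixes U V :: "'a \<Rightarrow> real ^ 'd"
  assumes U: "distributed M lborel U (\<lambda>x. ennreal (gauss_density a x))"
    and V: "distributed M lborel V (\<lambda>x. ennreal (gauss_density b x))"
    and indep: "indep_var borel U borel V" and a: "a > 0" and b: "b > 0"
  shows "indep_var borel (\<lambda>\<omega>. U \<omega> + V \<omega>) borel (\<lambda>\<omega>. b *\<^sub>R U \<omega> - a *\<^sub>R V \<omega>)"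
proof -
  have [measurable]: "U \<in> borel_measurable M" "V \<in> borel_measurable M"
    using U V by (simp_all add: distributed_def)
  define S where "S \<omega> = U \<omega> + V \<omega>" for \<omega>
  define W where "W \<omega> = b *\<^sub>R U \<omega> - a *\<^sub>R V \<omega>" for \<omega>
  have [measurable]: "S \<in> borel_measurable M" "W \<in> borel_measurable M"
    unfolding S_def W_def by measurable
  note joint = emeasure_gauss_sum_diff[OF U V indep a b, folded S_def W_def]
  note normalized = nn_integral_gauss_density_eq_1[OF U a]
  have "indep_set {S -` A \<inter> space M | A. A \<in> sets borel} {W -` A \<inter> space M | A. A \<in> sets borel}"
  proof (rule indep_setI)
    fix x y
    assume "x \<in> {S -` A \<inter> space M | A. A \<in> sets borel}" "y \<in> {W -` A \<inter> space M | A. A \<in> sets borel}"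
    then obtain E F where "x = S -` E \<inter> space M" and E: "E \<in> sets borel"
      and "y = W -` F \<inter> space M" and F: "F \<in> sets borel"
      by auto
    then have x: "x = {\<omega> \<in> space M. S \<omega> \<in> E \<and> W \<omega> \<in> UNIV}"
      and y: "y = {\<omega> \<in> space M. S \<omega> \<in> UNIV \<and> W \<omega> \<in> F}"
      by auto
    have "x \<inter> y = {\<omega> \<in> space M. S \<omega> \<in> E \<and> W \<omega> \<in> F}"
      using x y by auto
    then show "prob (x \<inter> y) = prob x * prob y"
      unfolding measure_def x y
      using joint[OF E F] joint[OF E space_in_borel] joint[OF space_in_borel F] normalized a b
      by (simp add: enn2real_mult)
  qed auto
  then have "indep_var borel S borel W"
    by (simp add: indep_var_eq indep_set_sigma_sets Int_stable_vimages)
  then show ?thesis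
    by (simp add: S_def[abs_def] W_def[abs_def])
qed

section \<open>Conditional expectations and independent information\<close>

lemma (in prob_space) set_integral_indep_set:
  fixes g :: "'a \<Rightarrow> real"
  assumes indep: "indep_set W Z" and W: "sigma_algebra (space M) W" and Z: "sigma_algebra (space M) Z"
    and D: "D \<in> Z" and g: "integrable M g" and gW: "g \<in> borel_measurable (sigma (space M) W)"
  shows "(\<integral>x\<in>D. g x \<partial>M) = prob D * (\<integral>x. g x \<partial>M)"
proof -
  have D_event: "D \<in> events"
    using indep_setD_ev2[OF indep] D by auto
  have "(indicator D :: 'a \<Rightarrow> real) \<in> borel_measurable (sigma (space M) Z)"
    using D Z by (intro borel_measurable_indicator) (simp add: sigma_algebra.sets_measure_of_eq)
  from sigma_sets_vimages_subset[OF Z this] sigma_sets_vimages_subset[OF W gW]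
  have "indep_var borel (indicator D) borel g"
    unfolding indep_var_eq using indep_set_mono[OF indep_set_commute[OF indep]] g D_event
    by auto
  then have "(\<integral>x. indicator D x * g x \<partial>M) = (\<integral>x. indicator D x \<partial>M) * (\<integral>x. g x \<partial>M)"
    using g D_event
    by (intro indep_var_lebesgue_integral integrable_real_indicator) (auto simp: less_top[symmetric])
  then show ?thesis
    using D_event by (simp add: set_lebesgue_integral_def)
qed

lemma set_integral_space_Diff:
  fixes h :: "'a \<Rightarrow> real"
  assumes A: "A \<in> sets M" and h: "integrable M h"
  shows "(\<integral>x\<in>space M - A. h x \<partial>M) = (\<integral>x\<in>space M. h x \<partial>M) - (\<integral>x\<in>A. h x \<partial>M)"
proof -
  have "set_integrable M A h" "set_integrable M (space M - A) h"
    unfolding set_integrable_def by (intro integrable_mult_indicator sets.compl_sets A h)+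
  from set_integral_Un[OF _ this]
  have "(\<integral>x\<in>A \<union> (space M - A). h x \<partial>M) = (\<integral>x\<in>A. h x \<partial>M) + (\<integral>x\<in>space M - A. h x \<partial>M)"
    by auto
  moreover have "A \<union> (space M - A) = space M"
    using A sets.sets_into_space by auto
  ultimately show ?thesis
    by simp
qed

lemma set_integral_eq_sigma_sets:
  fixes f g :: "'a \<Rightarrow> real"
  assumes f: "integrable M f" and g: "integrable M g"
    and stable: "Int_stable G" and G: "G \<subseteq> sets M"
    and eq: "\<And>A. A \<in> G \<Longrightarrow> (\<integral>x\<in>A. f x \<partial>M) = (\<integral>x\<in>A. g x \<partial>M)"
    and eq_space: "(\<integral>x\<in>space M. f x \<partial>M) = (\<integral>x\<in>space M. g x \<partial>M)"
    and B: "B \<in> sigma_sets (space M) G"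
  shows "(\<integral>x\<in>B. f x \<partial>M) = (\<integral>x\<in>B. g x \<partial>M)"
proof -
  have "G \<subseteq> Pow (space M)"
    using G sets.sets_into_space by blast
  from stable this B show ?thesis
  proof (induction rule: sigma_sets_induct_disjoint)
    case (basic A)
    then show ?case
      by (rule eq)
  next
    case empty
    then show ?case
      by (simp add: set_lebesgue_integral_def)
  next
    case (compl A)
    have A: "A \<in> sets M"
      using sets.sigma_sets_subset[OF G] compl(1) by auto
    show ?case
      using set_integral_space_Diff[OF A f] set_integral_space_Diff[OF A g] eq_space compl(2) by simp
  next
    case (union A)
    have A: "range A \<subseteq> sets M"
      using sets.sigma_sets_subset[OF G] union(2) by auto
    have "(\<integral>x\<in>(\<Union>i. A i). h x \<partial>M) = (\<Sum>i. (\<integral>x\<in>A i. h x \<partial>M))" if "integrable M h" for h :: "'a \<Rightarrow> real"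
    proof (rule lebesgue_integral_countable_add)
      show "set_integrable M (\<Union>i. A i) h"
        unfolding set_integrable_def using A that by (intro integrable_mult_indicator) auto
    qed (use A union(1) in \<open>auto simp: disjoint_family_on_def\<close>)
    with f g union(3) show ?case
      by simp
  qed
qed

lemma (in prob_space) set_integral_Int_cond_exp_indep:
  assumes subG: "subalgebra M G" and W: "sigma_algebra (space M) W" and Z: "sigma_algebra (space M) Z"
    and indep: "indep_set W Z" and GW: "sets G \<subseteq> W" and E: "E \<in> W"
    and C: "C \<in> sets G" and D: "D \<in> Z"
  shows "(\<integral>x\<in>C \<inter> D. indicator E x \<partial>M) = (\<integral>x\<in>C \<inter> D. real_cond_exp M G (indicator E) x \<partial>M)"
proof -
  interpret G: finite_measure_subalgebra M G
    by unfold_locales (rule subG)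
  interpret W: sigma_algebra "space M" W
    by (rule W)
  let ?f = "indicator E :: 'a \<Rightarrow> real"
  let ?h = "real_cond_exp M G ?f"
  have C_event: "C \<in> events" and E_event: "E \<in> events"
    using subG C indep_setD_ev1[OF indep] E by (auto simp: subalgebra_def)
  have f: "integrable M ?f"
    using E_event by (intro integrable_real_indicator) (auto simp: less_top[symmetric])
  have subW: "subalgebra (sigma (space M) W) G"
    using subG GW by (simp add: subalgebra_def W.sets_measure_of_eq W.space_measure_of_eq)
  have Ch: "(\<lambda>x. indicator C x * ?h x) \<in> borel_measurable (sigma (space M) W)"
    by (rule measurable_from_subalg[OF subW])
       (intro borel_measurable_times borel_measurable_indicator borel_measurable_cond_exp C)
  have "C \<inter> E \<in> W"
    using C GW E by auto
  then have CE: "(indicator (C \<inter> E) :: 'a \<Rightarrow> real) \<in> borel_measurable (sigma (space M) W)"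
    by (intro borel_measurable_indicator) (simp add: W.sets_measure_of_eq)
  have "(\<integral>x\<in>C \<inter> D. ?f x \<partial>M) = (\<integral>x\<in>D. indicator (C \<inter> E) x \<partial>M)"
    unfolding set_lebesgue_integral_def by (intro Bochner_Integration.integral_cong) (auto simp: indicator_def)
  also have "\<dots> = prob D * (\<integral>x. indicator (C \<inter> E) x \<partial>M)"
    using C_event E_event
    by (intro set_integral_indep_set[OF indep W Z D _ CE] integrable_real_indicator) (auto simp: less_top[symmetric])
  also have "(\<integral>x. indicator (C \<inter> E) x \<partial>M) = (\<integral>x\<in>C. ?f x \<partial>M)"
    unfolding set_lebesgue_integral_def by (intro Bochner_Integration.integral_cong) (auto simp: indicator_def)
  also have "\<dots> = (\<integral>x\<in>C. ?h x \<partial>M)"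
    by (rule G.real_cond_exp_intA[OF f C])
  also have "prob D * \<dots> = (\<integral>x\<in>D. indicator C x * ?h x \<partial>M)"
    using set_integral_indep_set[OF indep W Z D _ Ch] integrable_mult_indicator[OF C_event G.real_cond_exp_int(1)[OF f]]
    by (simp add: set_lebesgue_integral_def)
  also have "\<dots> = (\<integral>x\<in>C \<inter> D. ?h x \<partial>M)"
    unfolding set_lebesgue_integral_def by (intro Bochner_Integration.integral_cong) (auto simp: indicator_def)
  finally show ?thesis .
qed

lemma (in prob_space) set_integral_cond_exp_indep_sigma_sets:
  assumes subG: "subalgebra M G" and W: "sigma_algebra (space M) W" and Z: "sigma_algebra (space M) Z"
    and indep: "indep_set W Z" and GW: "sets G \<subseteq> W" and E: "E \<in> W"
    and A: "A \<in> sigma_sets (space M) {C \<inter> D | C D. C \<in> sets G \<and> D \<in> Z}"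
  shows "(\<integral>x\<in>A. indicator E x \<partial>M) = (\<integral>x\<in>A. real_cond_exp M G (indicator E) x \<partial>M)"
proof -
  interpret G: finite_measure_subalgebra M G
    by unfold_locales (rule subG)
  interpret Z: sigma_algebra "space M" Z
    by (rule Z)
  have f: "integrable M (indicator E :: 'a \<Rightarrow> real)"
    using indep_setD_ev1[OF indep] E by (intro integrable_real_indicator) (auto simp: less_top[symmetric])
  show ?thesis
  proof (rule set_integral_eq_sigma_sets[OF f G.real_cond_exp_int(1)[OF f] _ _ _ _ A])
    show "Int_stable {C \<inter> D | C D. C \<in> sets G \<and> D \<in> Z}"
      by (intro Int_stable_Int_pairs sets.Int_stable Z.Int_stable)
    show "{C \<inter> D | C D. C \<in> sets G \<and> D \<in> Z} \<subseteq> events"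
      using subG indep_setD_ev2[OF indep] by (auto simp: subalgebra_def)
    show "(\<integral>x\<in>space M. indicator E x \<partial>M) = (\<integral>x\<in>space M. real_cond_exp M G (indicator E) x \<partial>M)"
      using G.real_cond_exp_intA[OF f sets.top[of G]] subG by (simp add: subalgebra_def)
    fix B
    assume "B \<in> {C \<inter> D | C D. C \<in> sets G \<and> D \<in> Z}"
    then obtain C D where "B = C \<inter> D" "C \<in> sets G" "D \<in> Z"
      by auto
    then show "(\<integral>x\<in>B. indicator E x \<partial>M) = (\<integral>x\<in>B. real_cond_exp M G (indicator E) x \<partial>M)"
      using set_integral_Int_cond_exp_indep[OF subG W Z indep GW E] by simp
  qed
qed

lemma (in prob_space) real_cond_exp_indicator_indep:
  assumes subF: "subalgebra M F" and subG: "subalgebra M G"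
    and GF: "sets G \<subseteq> sets F" and FGZ: "sets F \<subseteq> sigma_sets (space M) (sets G \<union> Z)"
    and W: "sigma_algebra (space M) W" and Z: "sigma_algebra (space M) Z"
    and indep: "indep_set W Z" and GW: "sets G \<subseteq> W" and E: "E \<in> W"
  shows "AE x in M. real_cond_exp M F (indicator E) x = real_cond_exp M G (indicator E) x"
proof -
  interpret F: finite_measure_subalgebra M F
    by unfold_locales (rule subF)
  interpret G: finite_measure_subalgebra M G
    by unfold_locales (rule subG)
  interpret Z: sigma_algebra "space M" Z
    by (rule Z)
  have spaces: "space F = space M" "space G = space M"
    using subF subG by (auto simp: subalgebra_def)
  have f: "integrable M (indicator E :: 'a \<Rightarrow> real)"
    using indep_setD_ev1[OF indep] E by (intro integrable_real_indicator) (auto simp: less_top[symmetric])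
  note h = G.real_cond_exp_int(1)[OF f]
  have "sets G \<union> Z \<subseteq> {C \<inter> D | C D. C \<in> sets G \<and> D \<in> Z}"
    using sets.space_closed[of G] sets.top[of G] spaces Z.space_closed Z.top
    by (intro Un_subset_Int_pairs[where \<Omega>="space M"]) auto
  with FGZ have "sets F \<subseteq> sigma_sets (space M) {C \<inter> D | C D. C \<in> sets G \<and> D \<in> Z}"
    by (meson order_trans sigma_sets_mono')
  moreover have "real_cond_exp M G (indicator E) \<in> borel_measurable F"
    using GF spaces by (intro measurable_from_subalg[of F G]) (auto simp: subalgebra_def)
  ultimately show ?thesis
    using set_integral_cond_exp_indep_sigma_sets[OF subG W Z indep GW E] f h
    by (intro F.real_cond_exp_charact) auto
qed

section \<open>The observation chain\<close>

locale gaussian_observations = prob_space M for M :: "'a measure" +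
  fixes X :: "'a \<Rightarrow> real ^ 'd" and N :: "nat \<Rightarrow> 'a \<Rightarrow> real ^ 'd" and \<delta> :: "nat \<Rightarrow> real"
  assumes measurable_X [measurable]: "X \<in> borel_measurable M"
    and \<delta>_pos: "\<And>k. k \<ge> 1 \<Longrightarrow> \<delta> k > 0"
    and std_gaussian_N: "\<And>k. k \<ge> 1 \<Longrightarrow> std_gaussian_vector M (N k)"
    and indep_X_N: "indep_vars (\<lambda>_. borel) (\<lambda>i. case i of None \<Rightarrow> X | Some k \<Rightarrow> N k) (insert None (Some ` {1..}))"
begin

abbreviation Y :: "nat \<Rightarrow> 'a \<Rightarrow> real ^ 'd" where
  "Y \<equiv> obs_chain \<delta> X N"

definition time :: "nat \<Rightarrow> real" where
  "time j = (\<Sum>i\<in>{1..j}. \<delta> i)"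

definition noise :: "nat \<Rightarrow> 'a \<Rightarrow> real ^ 'd" where
  "noise j \<omega> = (\<Sum>i\<in>{1..j}. sqrt (\<delta> i) *\<^sub>R N i \<omega>)"

definition bridge :: "nat \<Rightarrow> 'a \<Rightarrow> real ^ 'd" where
  "bridge j \<omega> = time (Suc j) *\<^sub>R Y j \<omega> - time j *\<^sub>R Y (Suc j) \<omega>"

definition sigma_of_vars :: "('a \<Rightarrow> real ^ 'd) set \<Rightarrow> 'a measure" where
  "sigma_of_vars Fs = sigma (space M) (\<Union>f\<in>Fs. {f -` A \<inter> space M | A. A \<in> sets borel})"

lemma time_Suc: "time (Suc j) = time j + \<delta> (Suc j)"
  by (simp add: time_def)

lemma time_pos: "j \<ge> 1 \<Longrightarrow> time j > 0"
  unfolding time_def by (intro sum_pos) (auto intro: \<delta>_pos)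

lemma noise_Suc: "noise (Suc j) \<omega> = noise j \<omega> + sqrt (\<delta> (Suc j)) *\<^sub>R N (Suc j) \<omega>"
  by (simp add: noise_def)

lemma obs_chain_eq: "Y j \<omega> = time j *\<^sub>R X \<omega> + noise j \<omega>"
  by (induction j) (simp_all add: time_Suc noise_Suc algebra_simps noise_def time_def)

lemma bridge_eq: "bridge j \<omega> = \<delta> (Suc j) *\<^sub>R noise j \<omega> - (time j * sqrt (\<delta> (Suc j))) *\<^sub>R N (Suc j) \<omega>"
  unfolding bridge_def obs_chain_eq time_Suc noise_Suc by (simp add: algebra_simps)

lemma obs_chain_eq_bridge: "j \<ge> 1 \<Longrightarrow> Y j \<omega> = (1 / time (Suc j)) *\<^sub>R (bridge j \<omega> + time j *\<^sub>R Y (Suc j) \<omega>)"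
  using time_pos[of "Suc j"] unfolding bridge_def by (simp add: algebra_simps)

lemma measurable_N [measurable]: "k \<ge> 1 \<Longrightarrow> N k \<in> borel_measurable M"
  using std_gaussian_N[of k] by (simp add: std_gaussian_vector_def distributed_def)

lemma measurable_noise [measurable]: "noise j \<in> borel_measurable M"
  unfolding noise_def by (intro borel_measurable_sum borel_measurable_scaleR borel_measurable_const measurable_N) auto

lemma measurable_Y [measurable]: "Y j \<in> borel_measurable M"
  by (simp add: obs_chain_eq[abs_def])

lemma distributed_scaled_N:
  "k \<ge> 1 \<Longrightarrow> distributed M lborel (\<lambda>\<omega>. sqrt (\<delta> k) *\<^sub>R N k \<omega>) (\<lambda>x. ennreal (gauss_density (\<delta> k) x))"
  using distributed_scaleR_gauss[of "N k" "sqrt (\<delta> k)"] std_gaussian_N[of k] \<delta>_pos[of k]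
  by (simp add: std_gaussian_vector_iff)

lemma space_sigma_of_vars [simp]: "space (sigma_of_vars Fs) = space M"
  unfolding sigma_of_vars_def by (rule space_measure_of) auto

lemma sets_sigma_of_vars:
  "sets (sigma_of_vars Fs) = sigma_sets (space M) (\<Union>f\<in>Fs. {f -` A \<inter> space M | A. A \<in> sets borel})"
  unfolding sigma_of_vars_def by (rule sets_measure_of) auto

lemma sigma_algebra_sigma_of_vars: "sigma_algebra (space M) (sets (sigma_of_vars Fs))"
  using sets.sigma_algebra_axioms[of "sigma_of_vars Fs"] by simp

lemma measurable_sigma_of_vars: "f \<in> Fs \<Longrightarrow> f \<in> borel_measurable (sigma_of_vars Fs)"
  by (rule measurableI) (auto simp: sets_sigma_of_vars)

lemma sets_sigma_of_vars_subset:
  assumes "space K = space M" and "\<And>f. f \<in> Fs \<Longrightarrow> f \<in> borel_measurable K"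
  shows "sets (sigma_of_vars Fs) \<subseteq> sets K"
  unfolding sets_sigma_of_vars
  using assms measurable_sets[OF assms(2)] sets.top[of K] by (intro sets.sigma_sets_subset') auto

lemma sets_sigma_of_vars_mono: "Fs \<subseteq> Gs \<Longrightarrow> sets (sigma_of_vars Fs) \<subseteq> sets (sigma_of_vars Gs)"
  unfolding sets_sigma_of_vars by (intro sigma_sets_mono') auto

lemma sets_sigma_of_vars_Un:
  "sets (sigma_of_vars (Fs \<union> Gs)) = sigma_sets (space M) (sets (sigma_of_vars Fs) \<union> sets (sigma_of_vars Gs))"
proof
  show "sets (sigma_of_vars (Fs \<union> Gs)) \<subseteq> sigma_sets (space M) (sets (sigma_of_vars Fs) \<union> sets (sigma_of_vars Gs))"
    unfolding sets_sigma_of_vars by (intro sigma_sets_mono') auto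
  have "sets (sigma_of_vars Fs) \<union> sets (sigma_of_vars Gs) \<subseteq> sets (sigma_of_vars (Fs \<union> Gs))"
    using sets_sigma_of_vars_mono[of Fs "Fs \<union> Gs"] sets_sigma_of_vars_mono[of Gs "Fs \<union> Gs"] by auto
  then show "sigma_sets (space M) (sets (sigma_of_vars Fs) \<union> sets (sigma_of_vars Gs)) \<subseteq> sets (sigma_of_vars (Fs \<union> Gs))"
    by (intro sets.sigma_sets_subset') auto
qed

lemma gen_sigma_eq_sigma_of_vars: "gen_sigma M Z J = sigma_of_vars (Z ` J)"
  by (simp add: gen_sigma_def sigma_of_vars_def)

lemma indep_var_iff_sigma_of_vars:
  "indep_var borel f borel g \<longleftrightarrow> f \<in> borel_measurable M \<and> g \<in> borel_measurable M \<and>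
    indep_set (sets (sigma_of_vars {f})) (sets (sigma_of_vars {g}))"
  by (simp add: indep_var_eq sets_sigma_of_vars)

lemma measurable_noise_sigma_N: "{1..j} \<subseteq> J \<Longrightarrow> noise j \<in> borel_measurable (sigma_of_vars (N ` J))"
  unfolding noise_def
  by (intro borel_measurable_sum borel_measurable_scaleR borel_measurable_const measurable_sigma_of_vars) auto

lemma measurable_bridge_sigma_N: "{1..Suc j} \<subseteq> J \<Longrightarrow> bridge j \<in> borel_measurable (sigma_of_vars (N ` J))"
  unfolding bridge_eq[abs_def]
  by (intro borel_measurable_diff borel_measurable_scaleR borel_measurable_const measurable_noise_sigma_N
      measurable_sigma_of_vars imageI) auto

lemma sets_sigma_of_noise: "sets (sigma_of_vars {noise j}) \<subseteq> sets (sigma_of_vars (N ` {1..j}))"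
  using measurable_noise_sigma_N[of j "{1..j}"] by (intro sets_sigma_of_vars_subset) auto

lemma sets_sigma_of_bridges: "sets (sigma_of_vars (bridge ` {1..<j})) \<subseteq> sets (sigma_of_vars (N ` {1..j}))"
  using measurable_bridge_sigma_N[of _ "{1..j}"] by (intro sets_sigma_of_vars_subset) auto

lemma indep_set_sigma_of_vars_X_N:
  fixes I1 I2 :: "nat option set"
  defines "Z \<equiv> \<lambda>i. case i of None \<Rightarrow> X | Some k \<Rightarrow> N k"
  assumes "I1 \<subseteq> insert None (Some ` {1..})" "I2 \<subseteq> insert None (Some ` {1..})" "I1 \<inter> I2 = {}"
  shows "indep_set (sets (sigma_of_vars (Z ` I1))) (sets (sigma_of_vars (Z ` I2)))"
  using indep_vars_indep_set_UN[OF indep_X_N[folded Z_def] assms(2-4)]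
  by (simp add: sets_sigma_of_vars image_image)

lemma indep_N_Suc: "indep_set (sets (sigma_of_vars {N (Suc j)})) (sets (sigma_of_vars (N ` {1..j})))"
  using indep_set_sigma_of_vars_X_N[of "{Some (Suc j)}" "Some ` {1..j}"] by (force simp: image_image)

lemma indep_X_N_Suc: "indep_set (sets (sigma_of_vars {X, N (Suc k)})) (sets (sigma_of_vars (N ` {1..k})))"
  using indep_set_sigma_of_vars_X_N[of "{None, Some (Suc k)}" "Some ` {1..k}"] by (force simp: image_image)

lemma noise_Suc_distributed_indep_bridge:
  assumes j: "j \<ge> 1" and noise: "distributed M lborel (noise j) (\<lambda>x. ennreal (gauss_density (time j) x))"
  shows "distributed M lborel (noise (Suc j)) (\<lambda>x. ennreal (gauss_density (time (Suc j)) x))"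
    and "indep_set (sets (sigma_of_vars {noise (Suc j)})) (sets (sigma_of_vars {bridge j}))"
proof -
  define V where "V \<omega> = sqrt (\<delta> (Suc j)) *\<^sub>R N (Suc j) \<omega>" for \<omega>
  have V: "distributed M lborel V (\<lambda>x. ennreal (gauss_density (\<delta> (Suc j)) x))"
    unfolding V_def[abs_def] by (rule distributed_scaled_N) simp
  have "V \<in> borel_measurable (sigma_of_vars {N (Suc j)})"
    unfolding V_def[abs_def] by (intro borel_measurable_scaleR borel_measurable_const measurable_sigma_of_vars) simp
  then have "sets (sigma_of_vars {V}) \<subseteq> sets (sigma_of_vars {N (Suc j)})"
    by (intro sets_sigma_of_vars_subset) auto
  with indep_set_mono[OF indep_set_commute[OF indep_N_Suc] sets_sigma_of_noise]
  have "indep_var borel (noise j) borel V"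
    unfolding indep_var_iff_sigma_of_vars using V by (simp add: distributed_def)
  note sum = distributed_gauss_sum[OF noise V this time_pos[OF j] \<delta>_pos]
    indep_var_gauss_sum_diff[OF noise V this time_pos[OF j] \<delta>_pos]
  have "noise (Suc j) = (\<lambda>\<omega>. noise j \<omega> + V \<omega>)"
    by (simp add: V_def noise_Suc fun_eq_iff)
  moreover have "bridge j = (\<lambda>\<omega>. \<delta> (Suc j) *\<^sub>R noise j \<omega> - time j *\<^sub>R V \<omega>)"
    by (simp add: V_def bridge_eq fun_eq_iff)
  ultimately show "distributed M lborel (noise (Suc j)) (\<lambda>x. ennreal (gauss_density (time (Suc j)) x))"
    and "indep_set (sets (sigma_of_vars {noise (Suc j)})) (sets (sigma_of_vars {bridge j}))"
    using sum by (simp_all add: time_Suc indep_var_iff_sigma_of_vars)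
qed

lemma noise_distributed_indep_bridges:
  assumes "j \<ge> 1"
  shows "distributed M lborel (noise j) (\<lambda>x. ennreal (gauss_density (time j) x)) \<and>
    indep_set (sets (sigma_of_vars {noise j})) (sets (sigma_of_vars (bridge ` {1..<j})))"
  using assms
proof (induction j rule: nat_induct_at_least)
  case base
  have "noise 1 = (\<lambda>\<omega>. sqrt (\<delta> 1) *\<^sub>R N 1 \<omega>)" and "time 1 = \<delta> 1"
    by (simp_all add: noise_def[abs_def] time_def)
  moreover have "sets (sigma_of_vars {noise 1}) \<subseteq> events"
    by (intro sets_sigma_of_vars_subset) auto
  ultimately show ?case
    using distributed_scaled_N[of 1] indep_set_trivial by (simp add: sets_sigma_of_vars sigma_sets_empty_eq)
next
  case (Suc j)
  let ?\<sigma> = "\<lambda>Fs. sets (sigma_of_vars Fs)"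
  have noise: "distributed M lborel (noise j) (\<lambda>x. ennreal (gauss_density (time j) x))"
    and indep: "indep_set (?\<sigma> {noise j}) (?\<sigma> (bridge ` {1..<j}))"
    using Suc.IH by auto
  note step = noise_Suc_distributed_indep_bridge[OF Suc.hyps noise]
  have "indep_set (sigma_sets (space M) (?\<sigma> {N (Suc j)} \<union> ?\<sigma> {noise j})) (?\<sigma> (bridge ` {1..<j}))"
    by (rule indep_set_sigma_sets_Un[OF indep_N_Suc indep sets_sigma_of_noise sets_sigma_of_bridges
          sigma_algebra_sigma_of_vars sigma_algebra_sigma_of_vars sigma_algebra_sigma_of_vars
          sigma_algebra_sigma_of_vars])
  then have past: "indep_set (?\<sigma> {N (Suc j), noise j}) (?\<sigma> (bridge ` {1..<j}))"
    using sets_sigma_of_vars_Un[of "{N (Suc j)}" "{noise j}"] by (simp add: insert_commute)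
  have "N (Suc j) \<in> borel_measurable (sigma_of_vars {N (Suc j), noise j})"
    and "noise j \<in> borel_measurable (sigma_of_vars {N (Suc j), noise j})"
    by (simp_all add: measurable_sigma_of_vars)
  then have "bridge j \<in> borel_measurable (sigma_of_vars {N (Suc j), noise j})"
    and "noise (Suc j) \<in> borel_measurable (sigma_of_vars {N (Suc j), noise j})"
    unfolding bridge_eq[abs_def] noise_Suc[abs_def] by measurable
  then have "?\<sigma> {bridge j} \<subseteq> ?\<sigma> {N (Suc j), noise j}" and "?\<sigma> {noise (Suc j)} \<subseteq> ?\<sigma> {N (Suc j), noise j}"
    by (intro sets_sigma_of_vars_subset; simp)+
  from indep_set_sigma_sets_Un[OF indep_set_commute[OF past] indep_set_commute[OF step(2)] this
      sigma_algebra_sigma_of_vars sigma_algebra_sigma_of_vars sigma_algebra_sigma_of_vars sigma_algebra_sigma_of_vars]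
  have "indep_set (?\<sigma> (bridge ` {1..<j} \<union> {bridge j})) (?\<sigma> {noise (Suc j)})"
    by (simp only: sets_sigma_of_vars_Un)
  moreover have "bridge ` {1..<j} \<union> {bridge j} = bridge ` {1..<Suc j}"
    using Suc.hyps by (simp add: atLeastLessThanSuc)
  ultimately show ?case
    using step(1) indep_set_commute by auto
qed

lemma measurable_obs_chain_past:
  assumes "j \<le> k"
  shows "Y j \<in> borel_measurable (sigma_of_vars (insert (Y k) (bridge ` {1..<k})))"
  using assms
proof (induction j rule: inc_induct)
  case base
  show ?case
    by (simp add: measurable_sigma_of_vars)
next
  case (step n)
  show ?case
  proof (cases "n = 0")
    case True
    then show ?thesis
      by simp
  next
    case False
    then have "bridge n \<in> borel_measurable (sigma_of_vars (insert (Y k) (bridge ` {1..<k})))"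
      using step.hyps by (intro measurable_sigma_of_vars) auto
    with step.IH have "(\<lambda>\<omega>. (1 / time (Suc n)) *\<^sub>R (bridge n \<omega> + time n *\<^sub>R Y (Suc n) \<omega>))
        \<in> borel_measurable (sigma_of_vars (insert (Y k) (bridge ` {1..<k})))"
      by (intro borel_measurable_scaleR borel_measurable_add borel_measurable_const)
    moreover have "Y n = (\<lambda>\<omega>. (1 / time (Suc n)) *\<^sub>R (bridge n \<omega> + time n *\<^sub>R Y (Suc n) \<omega>))"
      using False by (intro ext obs_chain_eq_bridge) simp
    ultimately show ?thesis
      by (simp only:)
  qed
qed

lemma subalgebra_gen_sigma: "subalgebra M (gen_sigma M Y J)"
proof -
  have "sets (sigma_of_vars (Y ` J)) \<subseteq> sets M"
    by (rule sets_sigma_of_vars_subset) auto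
  then show ?thesis
    by (simp add: subalgebra_def gen_sigma_eq_sigma_of_vars)
qed

lemma indep_present_bridges:
  assumes "k \<ge> 1"
  shows "indep_set (sets (sigma_of_vars {X, N (Suc k), noise k})) (sets (sigma_of_vars (bridge ` {1..<k})))"
proof -
  have "indep_set (sigma_sets (space M) (sets (sigma_of_vars {X, N (Suc k)}) \<union> sets (sigma_of_vars {noise k})))
      (sets (sigma_of_vars (bridge ` {1..<k})))"
    using noise_distributed_indep_bridges[OF assms]
    by (intro indep_set_sigma_sets_Un[OF indep_X_N_Suc _ sets_sigma_of_noise sets_sigma_of_bridges]
        sigma_algebra_sigma_of_vars) auto
  then show ?thesis
    using sets_sigma_of_vars_Un[of "{X, N (Suc k)}" "{noise k}"] by (simp add: insert_commute)
qed

lemma measurable_obs_chain_present: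
  shows "Y k \<in> borel_measurable (sigma_of_vars {X, N (Suc k), noise k})"
    and "Y (Suc k) \<in> borel_measurable (sigma_of_vars {X, N (Suc k), noise k})"
proof -
  have X: "X \<in> borel_measurable (sigma_of_vars {X, N (Suc k), noise k})"
    and N: "N (Suc k) \<in> borel_measurable (sigma_of_vars {X, N (Suc k), noise k})"
    and "noise k \<in> borel_measurable (sigma_of_vars {X, N (Suc k), noise k})"
    by (simp_all add: measurable_sigma_of_vars)
  then show Y_k: "Y k \<in> borel_measurable (sigma_of_vars {X, N (Suc k), noise k})"
    unfolding obs_chain_eq[abs_def] by measurable
  have "Y (Suc k) = (\<lambda>\<omega>. Y k \<omega> + \<delta> (Suc k) *\<^sub>R X \<omega> + sqrt (\<delta> (Suc k)) *\<^sub>R N (Suc k) \<omega>)"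
    by (simp add: fun_eq_iff)
  then show "Y (Suc k) \<in> borel_measurable (sigma_of_vars {X, N (Suc k), noise k})"
    using Y_k X N by (simp only:) (intro borel_measurable_add borel_measurable_scaleR borel_measurable_const)
qed

lemma sets_gen_sigma_past:
  "sets (gen_sigma M Y {..k})
    \<subseteq> sigma_sets (space M) (sets (gen_sigma M Y {k}) \<union> sets (sigma_of_vars (bridge ` {1..<k})))"
proof -
  have "sets (sigma_of_vars (Y ` {..k})) \<subseteq> sets (sigma_of_vars ({Y k} \<union> bridge ` {1..<k}))"
  proof (rule sets_sigma_of_vars_subset)
    show "f \<in> borel_measurable (sigma_of_vars ({Y k} \<union> bridge ` {1..<k}))" if "f \<in> Y ` {..k}" for f
      using that measurable_obs_chain_past by auto
  qed simp
  then show ?thesis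
    using sets_sigma_of_vars_Un[of "{Y k}" "bridge ` {1..<k}"] by (simp add: gen_sigma_eq_sigma_of_vars)
qed

theorem markov_chain_obs_chain: "markov_chain M Y"
  unfolding markov_chain_def
proof (intro conjI allI ballI)
  fix k and A :: "(real ^ 'd) set"
  assume A: "A \<in> sets borel"
  let ?E = "Y (Suc k) -` A \<inter> space M"
  show "AE \<omega> in M. real_cond_exp M (gen_sigma M Y {..k}) (indicator ?E) \<omega>
                  = real_cond_exp M (gen_sigma M Y {k}) (indicator ?E) \<omega>"
  proof (cases "k = 0")
    case True
    then have "{..k} = {k}"
      by auto
    then show ?thesis
      by simp
  next
    case False
    have E: "?E \<in> sets (sigma_of_vars {X, N (Suc k), noise k})"
      using measurable_sets[OF measurable_obs_chain_present(2) A] by simp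
    have present: "sets (gen_sigma M Y {k}) \<subseteq> sets (sigma_of_vars {X, N (Suc k), noise k})"
      unfolding gen_sigma_eq_sigma_of_vars using measurable_obs_chain_present(1)
      by (intro sets_sigma_of_vars_subset) auto
    have coarser: "sets (gen_sigma M Y {k}) \<subseteq> sets (gen_sigma M Y {..k})"
      unfolding gen_sigma_eq_sigma_of_vars by (intro sets_sigma_of_vars_mono) auto
    from False have "indep_set (sets (sigma_of_vars {X, N (Suc k), noise k})) (sets (sigma_of_vars (bridge ` {1..<k})))"
      by (intro indep_present_bridges) simp
    from real_cond_exp_indicator_indep[OF subalgebra_gen_sigma subalgebra_gen_sigma coarser
        sets_gen_sigma_past sigma_algebra_sigma_of_vars sigma_algebra_sigma_of_vars this present E]
    show ?thesis .
  qed
qed simp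

end

theorem lemma1:
  fixes M :: "'a measure"
    and X :: "'a \<Rightarrow> real ^ 'd"
    and N :: "nat \<Rightarrow> 'a \<Rightarrow> real ^ 'd"
    and \<delta> :: "nat \<Rightarrow> real"
  assumes "prob_space M"
    and "X \<in> borel_measurable M"
    and "\<And>k. k \<ge> 1 \<Longrightarrow> \<delta> k > 0"
    and "\<And>k. k \<ge> 1 \<Longrightarrow> std_gaussian_vector M (N k)"
    and "prob_space.indep_vars M (\<lambda>_. borel)
           (\<lambda>i. case i of None \<Rightarrow> X | Some k \<Rightarrow> N k) (insert None (Some ` {1..}))"
  shows "markov_chain M (obs_chain \<delta> X N)"
proof -
  interpret gaussian_observations M X N \<delta>
    using assms by (simp add: gaussian_observations_def gaussian_observations_axioms_def)
  show ?thesis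
    by (rule markov_chain_obs_chain)
qed

end
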